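(* Fix $N\ge 1$ and $\Delta t>0$. Let $\mathbf{b}_n,\mathbf{b}_{n+1}\in\mathbb{C}^N$ with components $b_{j,n},b_{j,n+1}$, with the convention $b_{0,m}=b_{N+1,m}=0$ for $m\in\{n,n+1\}$, and suppose that $\mathbf{b}_{n+1}$ is an exact solution of the system $$b_{j,n+1}=b_{j,n}+\Delta t\Big(-i\,|b|^2_{j,n+1/2}\,b_{j,n+1/2}+2i\,\overline{b_{j,n+1/2}}\,\big(b_{j+1,n+1/2}^2+b_{j-1,n+1/2}^2\big)\Big),\qquad j=1,\dots,N,$$ where $b_{j,n+1/2}=\tfrac12(b_{j,n}+b_{j,n+1})$ and $|b|^2_{j,n+1/2}=\tfrac12\big(|b_{j,n}|^2+|b_{j,n+1}|^2\big)$. Then $\sum_{j=1}^N|b_{j,n+1}|^2=\sum_{j=1}^N|b_{j,n}|^2$.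
   Context: This is a "modified midpoint" discretization of the toy model system $-i\dot b_j=-|b_j|^2b_j+2b_{j-1}^2\bar b_j+2b_{j+1}^2\bar b_j$, $j=1,\dots,N$, with $b_0=b_{N+1}=0$; the conserved quantity is the mass $\mathcal{M}[\mathbf{b}]=\sum_j|b_j|^2$. *)

theory Defs
  imports Complex_Main
begin

text \<open>A vector in C^N is represented by a function nat => complex whose relevant
components are indices 1..N. The boundary convention b_0 = b_(N+1) = 0 is realised
by the zero extension below (components outside 1..N are set to 0).\<close>

definition ext :: "nat \<Rightarrow> (nat \<Rightarrow> complex) \<Rightarrow> nat \<Rightarrow> complex" where
  "ext N b j = (if 1 \<le> j \<and> j \<le> N then b j else 0)"

definition mm_step :: "nat \<Rightarrow> real \<Rightarrow> (nat \<Rightarrow> complex) \<Rightarrow> (nat \<Rightarrow> complex) \<Rightarrow> nat \<Rightarrow> bool" where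
  "mm_step N dt b b' j \<longleftrightarrow>
     (let h = (\<lambda>k. (ext N b k + ext N b' k) / 2);
          m2 = (cmod (b j))\<^sup>2 / 2 + (cmod (b' j))\<^sup>2 / 2
      in b' j = b j + complex_of_real dt *
           (- \<i> * complex_of_real m2 * h j
            + 2 * \<i> * cnj (h j) * ((h (j + 1))\<^sup>2 + (h (j - 1))\<^sup>2)))"

end

theory Submission
  imports Defs
begin

text \<open>Write \<open>h\<^sub>j\<close> for the midpoint value. Multiplying the scheme by \<open>cnj h\<^sub>j\<close> and taking real
  parts, the self-interaction term \<open>-i |b|\<^sup>2 h\<^sub>j\<close> contributes nothing (its coefficient is real),
  and the coupling terms leave \<open>|b\<^sub>j'|\<^sup>2 - |b\<^sub>j|\<^sup>2 = -4 dt (F j - F (j - 1))\<close> with the flux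
  \<open>F k = Im (cnj (h\<^sub>k\<^sup>2) h\<^sub>k\<^sub>+\<^sub>1\<^sup>2)\<close>. Summing over \<open>j\<close> telescopes to \<open>F N - F 0\<close>, which vanishes
  because of the zero boundary values.\<close>

lemma cmod_power2_diff_eq_midpoint:
  fixes x y :: complex
  shows "(cmod y)\<^sup>2 - (cmod x)\<^sup>2 = 2 * Re ((y - x) * cnj ((x + y) / 2))"
  unfolding cmod_power2 by (simp add: algebra_simps power2_eq_square)

lemma midpoint_step_cmod_power2_diff:
  fixes x y p q :: complex and dt m :: real
  assumes "y = x + complex_of_real dt * (- \<i> * complex_of_real m * ((x + y) / 2)
             + 2 * \<i> * cnj ((x + y) / 2) * (p\<^sup>2 + q\<^sup>2))"
  shows "(cmod y)\<^sup>2 - (cmod x)\<^sup>2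
           = -4 * dt * (Im (cnj (((x + y) / 2)\<^sup>2) * p\<^sup>2) - Im (cnj (q\<^sup>2) * ((x + y) / 2)\<^sup>2))"
proof -
  define h where "h = (x + y) / 2"
  have step: "y - x = complex_of_real dt * (- \<i> * complex_of_real m * h + 2 * \<i> * cnj h * (p\<^sup>2 + q\<^sup>2))"
    using assms unfolding h_def by (metis add_diff_cancel_left')
  have "2 * Re ((y - x) * cnj h) = -4 * dt * (Im (cnj (h\<^sup>2) * p\<^sup>2) - Im (cnj (q\<^sup>2) * h\<^sup>2))"
    unfolding step by (simp add: algebra_simps power2_eq_square)
  then show ?thesis
    unfolding cmod_power2_diff_eq_midpoint h_def .
qed

lemma sum_atLeast1_atMost_telescope:
  fixes f :: "nat \<Rightarrow> 'a::ab_group_add"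
  shows "(\<Sum>j = 1..n. f j - f (j - 1)) = f n - f 0"
  by (induction n) simp_all

theorem proposition2p2:
  fixes N :: nat and dt :: real and b b' :: "nat \<Rightarrow> complex"
  assumes "N \<ge> 1" and "dt > 0"
    and "\<And>j. 1 \<le> j \<Longrightarrow> j \<le> N \<Longrightarrow> mm_step N dt b b' j"
  shows "(\<Sum>j=1..N. (cmod (b' j))\<^sup>2) = (\<Sum>j=1..N. (cmod (b j))\<^sup>2)"
proof -
  define h where "h = (\<lambda>k. (ext N b k + ext N b' k) / 2)"
  define flux where "flux = (\<lambda>k. Im (cnj ((h k)\<^sup>2) * (h (Suc k))\<^sup>2))"
  have local_balance: "(cmod (b' j))\<^sup>2 - (cmod (b j))\<^sup>2 = -4 * dt * (flux j - flux (j - 1))"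
    if j: "1 \<le> j" "j \<le> N" for j
  proof -
    have h_j: "h j = (b j + b' j) / 2"
      using j unfolding h_def ext_def by simp
    have "b' j = b j + complex_of_real dt * (- \<i> * complex_of_real ((cmod (b j))\<^sup>2 / 2 + (cmod (b' j))\<^sup>2 / 2)
            * ((b j + b' j) / 2) + 2 * \<i> * cnj ((b j + b' j) / 2) * ((h (j + 1))\<^sup>2 + (h (j - 1))\<^sup>2))"
      using assms(3)[OF j] h_j unfolding mm_step_def h_def Let_def by simp
    from midpoint_step_cmod_power2_diff[OF this] show ?thesis
      using j unfolding flux_def h_j [symmetric] by (simp add: Suc_diff_1)
  qed
  have "(\<Sum>j=1..N. (cmod (b' j))\<^sup>2) - (\<Sum>j=1..N. (cmod (b j))\<^sup>2)
      = -4 * dt * (\<Sum>j=1..N. flux j - flux (j - 1))"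
    by (simp add: sum_subtractf [symmetric] local_balance sum_distrib_left)
  also have "\<dots> = -4 * dt * (flux N - flux 0)"
    by (simp only: sum_atLeast1_atMost_telescope)
  also have "flux N - flux 0 = 0"
    unfolding flux_def h_def ext_def by simp
  finally show ?thesis by simp
qed

end
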